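(* Let $\mathfrak{A}$ be a unital C*-algebra and $\mathsf{L}$ a seminorm on the self-adjoint part $\mathrm{sa}(\mathfrak{A})$ such that $\{a\in\mathrm{sa}(\mathfrak{A}):\mathsf{L}(a)<\infty\}$ is dense in $\mathrm{sa}(\mathfrak{A})$. If $D\in[0,\infty]$ is such that $\mathrm{mk}_{\mathsf{L}}(\mu,\nu)\le D$ for all pure states $\mu,\nu$ of $\mathfrak{A}$, then $\mathrm{mk}_{\mathsf{L}}(\mu,\nu)\le D$ for all states $\mu,\nu$ of $\mathfrak{A}$.
   Context: For states $\varphi,\psi$ of $\mathfrak{A}$, the Monge–Kantorovich metric is $\mathrm{mk}_{\mathsf{L}}(\varphi,\psi)=\sup\{|\varphi(a)-\psi(a)|: a\in\mathrm{sa}(\mathfrak{A}),\ \mathsf{L}(a)\le1\}\in[0,\infty]$. *)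

theory Defs
  imports "HOL-Analysis.Analysis" "HOL-Library.Extended_Nonnegative_Real"
begin

class cstar_algebra = banach + real_normed_algebra_1 +
  fixes scaleC :: "complex \<Rightarrow> 'a \<Rightarrow> 'a"
    and cstar :: "'a \<Rightarrow> 'a"
  assumes scaleC_add_right: "scaleC c (x + y) = scaleC c x + scaleC c y"
    and scaleC_add_left: "scaleC (c + d) x = scaleC c x + scaleC d x"
    and scaleC_scaleC: "scaleC c (scaleC d x) = scaleC (c * d) x"
    and scaleC_one: "scaleC 1 x = x"
    and scaleR_scaleC: "scaleR r x = scaleC (complex_of_real r) x"
    and norm_scaleC: "norm (scaleC c x) = cmod c * norm x"
    and scaleC_mult_left: "scaleC c (x * y) = scaleC c x * y"
    and scaleC_mult_right: "scaleC c (x * y) = x * scaleC c y"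
    and cstar_add: "cstar (x + y) = cstar x + cstar y"
    and cstar_scaleC: "cstar (scaleC c x) = scaleC (cnj c) (cstar x)"
    and cstar_mult: "cstar (x * y) = cstar y * cstar x"
    and cstar_cstar: "cstar (cstar x) = x"
    and cstar_identity: "norm (cstar x * x) = (norm x)\<^sup>2"

definition sa :: "'a::cstar_algebra set" where
  "sa = {a. cstar a = a}"

definition is_state :: "('a::cstar_algebra \<Rightarrow> complex) \<Rightarrow> bool" where
  "is_state \<phi> \<longleftrightarrow>
     (\<forall>x y. \<phi> (x + y) = \<phi> x + \<phi> y) \<and>
     (\<forall>c x. \<phi> (scaleC c x) = c * \<phi> x) \<and>
     (\<forall>a. Im (\<phi> (cstar a * a)) = 0 \<and> Re (\<phi> (cstar a * a)) \<ge> 0) \<and>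
     \<phi> 1 = 1"

definition is_pure_state :: "('a::cstar_algebra \<Rightarrow> complex) \<Rightarrow> bool" where
  "is_pure_state \<phi> \<longleftrightarrow> is_state \<phi> \<and>
     (\<forall>\<psi>1 \<psi>2 t. is_state \<psi>1 \<and> is_state \<psi>2 \<and> 0 < t \<and> t < 1 \<and>
        \<phi> = (\<lambda>x. complex_of_real t * \<psi>1 x + complex_of_real (1 - t) * \<psi>2 x)
        \<longrightarrow> \<psi>1 = \<phi> \<and> \<psi>2 = \<phi>)"

text \<open>A seminorm on sa(A) with values in [0,\<infinity>] (only values on sa matter).\<close>
definition seminorm_sa :: "('a::cstar_algebra \<Rightarrow> ennreal) \<Rightarrow> bool" where
  "seminorm_sa L \<longleftrightarrow>
     (\<forall>a\<in>sa. \<forall>b\<in>sa. L (a + b) \<le> L a + L b) \<and>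
     (\<forall>a\<in>sa. \<forall>r::real. L (scaleR r a) = ennreal \<bar>r\<bar> * L a)"

definition mk :: "('a::cstar_algebra \<Rightarrow> ennreal) \<Rightarrow> ('a \<Rightarrow> complex) \<Rightarrow> ('a \<Rightarrow> complex) \<Rightarrow> ennreal" where
  "mk L \<phi> \<psi> = (SUP a \<in> {a \<in> sa. L a \<le> 1}. ennreal (cmod (\<phi> a - \<psi> a)))"

end

theory Submission
  imports Defs "HOL-Computational_Algebra.Formal_Power_Series"
begin

text \<open>For a self-adjoint \<open>a\<close>, the affine functional \<open>\<phi> \<mapsto> \<phi> a\<close> attains its maximum over the
  weak* compact state space at a pure state (the maximisers form a closed face, and a minimal
  closed face is a single extreme point). Hence for states \<open>\<mu>, \<nu>\<close> there are pure states
  \<open>p, q\<close> with \<open>\<mu> a \<le> p a\<close> and \<open>q a \<le> \<nu> a\<close>, so every term in the supremum defining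
  \<open>mk\<^sub>L(\<mu>, \<nu>)\<close> is dominated by a term of \<open>mk\<^sub>L(p, q) \<le> D\<close>.\<close>

lemma scaleC_zero_right: "scaleC c (0::'a::cstar_algebra) = 0"
  using scaleC_add_right[of c "0::'a" 0] by simp

lemma scaleC_minus_right: "scaleC c (- x::'a::cstar_algebra) = - scaleC c x"
proof -
  have "scaleC c x + scaleC c (-x) = 0"
    using scaleC_add_right[of c x "-x"] scaleC_zero_right[of c] by (metis add.right_inverse)
  then show ?thesis by (metis add.inverse_unique)
qed

lemma scaleC_minus_left: "scaleC (- c) (x::'a::cstar_algebra) = - scaleC c x"
proof -
  have "scaleC c x + scaleC (-c) x = scaleC 0 x"
    using scaleC_add_left[of c "-c" x] by simp
  also have "scaleC 0 x = (0::'a)"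
    using scaleR_scaleC[of 0 x] by simp
  finally show ?thesis by (metis add.inverse_unique)
qed

lemma cstar_zero: "cstar (0::'a::cstar_algebra) = 0"
  using cstar_add[of "0::'a" 0] by simp

lemma cstar_minus: "cstar (- x::'a::cstar_algebra) = - cstar x"
proof -
  have "cstar x + cstar (-x) = 0"
    using cstar_add[of x "-x"] cstar_zero by (metis add.right_inverse)
  then show ?thesis by (metis add.inverse_unique)
qed

lemma cstar_diff: "cstar (x - y::'a::cstar_algebra) = cstar x - cstar y"
  using cstar_add[of x "-y"] cstar_minus[of y] by simp

lemma cstar_one: "cstar (1::'a::cstar_algebra) = 1"
  using cstar_mult[of "cstar (1::'a)" 1] by (simp add: cstar_cstar)

lemma cstar_scaleR: "cstar (scaleR r (x::'a::cstar_algebra)) = scaleR r (cstar x)"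
  by (simp add: scaleR_scaleC cstar_scaleC)

lemma cstar_power: "cstar ((x::'a::cstar_algebra) ^ n) = (cstar x) ^ n"
proof (induction n)
  case 0
  then show ?case by (simp add: cstar_one)
next
  case (Suc n)
  have "cstar (x ^ Suc n) = cstar (x ^ n) * cstar x"
    by (simp add: cstar_mult)
  then show ?case using Suc by (simp add: power_Suc2 power_commutes)
qed

lemma norm_le_norm_cstar: "norm (x::'a::cstar_algebra) \<le> norm (cstar x)"
proof (cases "x = 0")
  case False
  have "norm x * norm x = norm (cstar x * x)"
    using cstar_identity[of x] by (simp add: power2_eq_square)
  also have "\<dots> \<le> norm (cstar x) * norm x" by (rule norm_mult_ineq)
  finally show ?thesis using False by simp
qed simp

lemma norm_cstar: "norm (cstar (x::'a::cstar_algebra)) = norm x"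
  using norm_le_norm_cstar[of x] norm_le_norm_cstar[of "cstar x"] by (simp add: cstar_cstar)

lemma bounded_linear_cstar: "bounded_linear (cstar :: 'a::cstar_algebra \<Rightarrow> 'a)"
  by (rule bounded_linear_intro[where K=1]) (simp_all add: cstar_add cstar_scaleR norm_cstar)

lemma sa_iff: "x \<in> sa \<longleftrightarrow> cstar x = x"
  by (simp add: sa_def)

section \<open>Square roots by the binomial series\<close>

lemma abs_gbinomial_half_le_1: "\<bar>(1/2::real) gchoose n\<bar> \<le> 1"
proof (induction n)
  case 0
  then show ?case by simp
next
  case (Suc n)
  have "real (Suc n) * ((1/2::real) gchoose Suc n) = (1/2 - real n) * ((1/2) gchoose n)"
    using gbinomial_mult_1[of "1/2::real" n] by (simp add: algebra_simps)
  then have "real (Suc n) * \<bar>(1/2::real) gchoose Suc n\<bar> = \<bar>1/2 - real n\<bar> * \<bar>(1/2) gchoose n\<bar>"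
    by (metis abs_mult abs_of_nat)
  also have "\<dots> \<le> real (Suc n) * 1"
    by (rule mult_mono) (use Suc in simp_all)
  finally show ?case by (simp del: of_nat_Suc)
qed

lemma gbinomial_half_convolution:
  "(\<Sum>i\<le>k. ((1/2::real) gchoose i) * ((1/2) gchoose (k - i))) = (if k \<le> 1 then 1 else 0)"
proof -
  have "((1::real) gchoose k) = (if k \<le> 1 then 1 else 0)"
  proof (cases "k \<le> 1")
    case True
    then have "k = 0 \<or> k = 1" by auto
    then show ?thesis by auto
  next
    case False
    have "(1::real) gchoose k = of_nat (1 choose k)"
      by (metis binomial_gbinomial of_nat_1)
    with False show ?thesis by (simp add: binomial_eq_0)
  qed
  then show ?thesis
    using gbinomial_Vandermonde[of "1/2::real" "1/2" k] by (simp add: atLeast0AtMost)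
qed

lemma binomial_series_half_square:
  fixes x :: "'a::{banach, real_normed_algebra_1}"
  assumes "norm x < 1"
  defines "t \<equiv> \<lambda>n. scaleR ((1/2::real) gchoose n) (x ^ n)"
  shows "summable t" and "suminf t * suminf t = 1 + x"
proof -
  have norm_t: "norm (t n) \<le> norm x ^ n" for n
  proof -
    have "norm (t n) = \<bar>(1/2::real) gchoose n\<bar> * norm (x ^ n)" by (simp add: t_def)
    also have "\<dots> \<le> 1 * norm x ^ n"
      using abs_gbinomial_half_le_1[of n] norm_power_ineq[of x n] by (intro mult_mono) simp_all
    finally show ?thesis by simp
  qed
  have summable_norm_t: "summable (\<lambda>n. norm (t n))"
    using assms(1) by (intro summable_comparison_test'[OF summable_geometric[of "norm x"], of 0])
      (simp_all add: norm_t)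
  then show "summable t" by (rule summable_norm_cancel)
  have "suminf t * suminf t = (\<Sum>k. \<Sum>i\<le>k. t i * t (k - i))"
    by (rule Cauchy_product[OF summable_norm_t summable_norm_t])
  also have "(\<lambda>k. \<Sum>i\<le>k. t i * t (k - i)) = (\<lambda>k. scaleR (if k \<le> 1 then 1 else 0) (x ^ k))"
  proof
    fix k
    have "t i * t (k - i) = scaleR (((1/2::real) gchoose i) * ((1/2) gchoose (k - i))) (x ^ k)"
      if "i \<le> k" for i
      using that by (simp add: t_def flip: power_add)
    then show "(\<Sum>i\<le>k. t i * t (k - i)) = scaleR (if k \<le> 1 then 1 else 0) (x ^ k)"
      by (simp add: gbinomial_half_convolution flip: scaleR_sum_left)
  qed
  also have "(\<Sum>k. scaleR (if k \<le> 1 then 1 else 0) (x ^ k))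
      = (\<Sum>k\<in>{0,1}. scaleR (if k \<le> 1 then 1 else 0) (x ^ k))"
    by (rule suminf_finite) auto
  finally show "suminf t * suminf t = 1 + x" by simp
qed

lemma sa_one_minus_eq_square:
  assumes y: "(y::'a::cstar_algebra) \<in> sa" and "norm y < 1"
  obtains b where "b \<in> sa" "b * b = 1 - y"
proof -
  define t where "t n = scaleR ((1/2::real) gchoose n) ((-y) ^ n)" for n
  have summable_t: "summable t" and square: "suminf t * suminf t = 1 - y"
    using binomial_series_half_square[of "-y"] \<open>norm y < 1\<close> unfolding t_def by simp_all
  have "cstar (-y) = -y" using y by (simp add: sa_iff cstar_minus)
  then have "(\<lambda>n. cstar (t n)) = t"
    by (intro ext) (simp add: t_def cstar_scaleR cstar_power)
  then have "cstar (suminf t) = suminf t"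
    using bounded_linear.suminf[OF bounded_linear_cstar summable_t] by simp
  then show thesis using that square by (simp add: sa_iff)
qed

section \<open>The state space\<close>

lemma state_add: "is_state \<phi> \<Longrightarrow> \<phi> (x + y) = \<phi> x + \<phi> y"
  by (simp add: is_state_def)

lemma state_scaleC: "is_state \<phi> \<Longrightarrow> \<phi> (scaleC c x) = c * \<phi> x"
  by (simp add: is_state_def)

lemma state_one: "is_state \<phi> \<Longrightarrow> \<phi> 1 = 1"
  by (simp add: is_state_def)

lemma state_zero: "is_state \<phi> \<Longrightarrow> \<phi> 0 = 0"
  using state_add[of \<phi> 0 0] by simp

lemma state_minus: "is_state \<phi> \<Longrightarrow> \<phi> (- x) = - \<phi> x"
  using state_add[of \<phi> x "-x"] state_zero[of \<phi>] by (simp add: eq_neg_iff_add_eq_0 add.commute)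

lemma state_diff: "is_state \<phi> \<Longrightarrow> \<phi> (x - y) = \<phi> x - \<phi> y"
  using state_add[of \<phi> x "-y"] state_minus[of \<phi> y] by simp

lemma state_scaleR: "is_state \<phi> \<Longrightarrow> \<phi> (scaleR r x) = complex_of_real r * \<phi> x"
  by (simp add: scaleR_scaleC state_scaleC)

lemma state_sa_real:
  assumes st: "is_state \<phi>" and a: "(a::'a::cstar_algebra) \<in> sa"
  shows "Im (\<phi> a) = 0"
proof -
  have ca: "cstar a = a" using a by (simp add: sa_iff)
  have "cstar (a + 1) * (a + 1) - cstar (a - 1) * (a - 1) = a + a + a + a"
    by (simp add: cstar_add cstar_diff ca cstar_one algebra_simps)
  then have "4 * \<phi> a = \<phi> (cstar (a + 1) * (a + 1)) - \<phi> (cstar (a - 1) * (a - 1))"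
    using st by (simp add: state_add flip: state_diff)
  then have "Im (4 * \<phi> a) = Im (\<phi> (cstar (a + 1) * (a + 1))) - Im (\<phi> (cstar (a - 1) * (a - 1)))"
    by simp
  also have "\<dots> = 0"
    using st by (simp add: is_state_def)
  finally show ?thesis by simp
qed

text \<open>A state is bounded by the positivity of \<open>\<phi>(1 - a / (2\<parallel>a\<parallel>))\<close>, which is of the
  form \<open>\<phi>(b\<^sup>* b)\<close> by the binomial square root.\<close>

lemma state_Re_le:
  assumes st: "is_state \<phi>" and a: "(a::'a::cstar_algebra) \<in> sa"
  shows "Re (\<phi> a) \<le> 2 * norm a"
proof (cases "a = 0")
  case True
  then show ?thesis using state_zero[OF st] by simp
next
  case False
  define r where "r = 1 / (2 * norm a)"
  have r: "r > 0" using False by (simp add: r_def)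
  have "scaleR r a \<in> sa" using a by (simp add: sa_iff cstar_scaleR)
  moreover have "norm (scaleR r a) < 1" using False by (simp add: r_def)
  ultimately obtain b where b: "b \<in> sa" "b * b = 1 - scaleR r a"
    by (rule sa_one_minus_eq_square)
  have "0 \<le> Re (\<phi> (cstar b * b))"
    using st by (simp add: is_state_def)
  also have "cstar b * b = 1 - scaleR r a"
    using b by (simp add: sa_iff)
  also have "Re (\<phi> (1 - scaleR r a)) = 1 - r * Re (\<phi> a)"
    using st by (simp add: state_diff state_one state_scaleR)
  finally have "Re (\<phi> a) \<le> 1 / r" using r by (simp add: field_simps)
  then show ?thesis by (simp add: r_def)
qed

lemma state_norm_sa_le:
  assumes st: "is_state \<phi>" and a: "(a::'a::cstar_algebra) \<in> sa"
  shows "cmod (\<phi> a) \<le> 2 * norm a"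
proof -
  have "-a \<in> sa" using a by (simp add: sa_iff cstar_minus)
  from state_Re_le[OF st this] have "- Re (\<phi> a) \<le> 2 * norm a"
    by (simp add: state_minus[OF st])
  then show ?thesis
    using state_sa_real[OF st a] state_Re_le[OF st a] by (simp add: cmod_eq_Re)
qed

lemma state_norm_le:
  assumes st: "is_state \<phi>"
  shows "cmod (\<phi> (x::'a::cstar_algebra)) \<le> 4 * norm x"
proof -
  define h where "h = scaleR (1/2) (x + cstar x)"
  define k where "k = scaleC (-\<i>/2) (x - cstar x)"
  have h_sa: "h \<in> sa" by (simp add: h_def sa_iff cstar_scaleR cstar_add cstar_cstar add.commute)
  have k_sa: "k \<in> sa"
    by (simp add: sa_iff k_def cstar_scaleC cstar_diff cstar_cstar scaleC_minus_left
        flip: scaleC_minus_right)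
  have "scaleC \<i> k = scaleR (1/2) (x - cstar x)"
    by (simp add: k_def scaleC_scaleC scaleR_scaleC)
  then have "h + scaleC \<i> k = scaleR (1/2 + 1/2) x"
    by (simp add: h_def scaleR_add_right scaleR_diff_right flip: scaleR_add_left)
  then have "x = h + scaleC \<i> k" by simp
  then have "\<phi> x = \<phi> h + \<i> * \<phi> k" using st by (simp add: state_add state_scaleC)
  then have "cmod (\<phi> x) \<le> cmod (\<phi> h) + cmod (\<phi> k)"
    by (metis norm_triangle_ineq norm_mult norm_ii mult_1)
  also have "\<dots> \<le> 2 * norm h + 2 * norm k"
    using state_norm_sa_le[OF st h_sa] state_norm_sa_le[OF st k_sa] by simp
  also have "\<dots> \<le> 4 * norm x"
  proof -
    have "norm h \<le> norm x"
      using norm_triangle_ineq[of x "cstar x"] by (simp add: h_def norm_cstar)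
    moreover have "norm k \<le> norm x"
      using norm_triangle_ineq4[of x "cstar x"]
      by (simp add: k_def norm_scaleC norm_cstar norm_divide)
    ultimately show ?thesis by simp
  qed
  finally show ?thesis .
qed

lemma continuous_on_eval [continuous_intros]:
  "continuous_on S (\<lambda>\<phi>::'a \<Rightarrow> 'b::topological_space. \<phi> x)"
  by (rule continuous_on_subset[OF continuous_on_product_coordinates]) simp

lemma continuous_on_Re_eval: "continuous_on S (\<lambda>\<phi>::'a \<Rightarrow> complex. Re (c * \<phi> x))"
  by (intro continuous_on_Re continuous_on_mult_left continuous_on_eval)

lemma closed_states: "closed {\<phi> :: 'a::cstar_algebra \<Rightarrow> complex. is_state \<phi>}"
  unfolding is_state_def
  by (intro closed_Collect_conj closed_Collect_all closed_Collect_eq closed_Collect_le;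
      intro continuous_intros)

text \<open>Banach--Alaoglu via Tychonoff: in the pointwise topology the states lie in a product of
  closed discs.\<close>

lemma compact_states: "compact {\<phi> :: 'a::cstar_algebra \<Rightarrow> complex. is_state \<phi>}"
proof -
  define P where "P = PiE (UNIV::'a set) (\<lambda>x. cball (0::complex) (4 * norm x))"
  have "compactin (product_topology (\<lambda>i. euclidean) UNIV) P"
    unfolding P_def compactin_PiE by simp
  then have "compact P" by (simp add: euclidean_product_topology)
  moreover have "{\<phi>. is_state \<phi>} = P \<inter> {\<phi>. is_state \<phi>}"
    unfolding P_def using state_norm_le by (auto simp: PiE_iff)
  ultimately show ?thesis using compact_Int_closed[OF _ closed_states] by metis
qed

section \<open>Faces of a set of complex-valued functions\<close>

definition convex_comb :: "real \<Rightarrow> ('a \<Rightarrow> complex) \<Rightarrow> ('a \<Rightarrow> complex) \<Rightarrow> 'a \<Rightarrow> complex" where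
  "convex_comb t \<psi>1 \<psi>2 = (\<lambda>x. complex_of_real t * \<psi>1 x + complex_of_real (1 - t) * \<psi>2 x)"

definition face_in :: "('a \<Rightarrow> complex) set \<Rightarrow> ('a \<Rightarrow> complex) set \<Rightarrow> bool" where
  "face_in K F \<longleftrightarrow> F \<subseteq> K \<and>
     (\<forall>\<psi>1\<in>K. \<forall>\<psi>2\<in>K. \<forall>t. 0 < t \<and> t < 1 \<and> convex_comb t \<psi>1 \<psi>2 \<in> F \<longrightarrow> \<psi>1 \<in> F \<and> \<psi>2 \<in> F)"

lemma face_in_subset: "face_in K F \<Longrightarrow> F \<subseteq> K"
  by (simp add: face_in_def)

lemma face_inD:
  "\<lbrakk>face_in K F; \<psi>1 \<in> K; \<psi>2 \<in> K; 0 < t; t < 1; convex_comb t \<psi>1 \<psi>2 \<in> F\<rbrakk> \<Longrightarrow> \<psi>1 \<in> F \<and> \<psi>2 \<in> F"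
  unfolding face_in_def by blast

lemma face_in_refl: "face_in K K"
  by (simp add: face_in_def)

lemma face_in_Inter: "\<lbrakk>C \<noteq> {}; \<And>F. F \<in> C \<Longrightarrow> face_in K F\<rbrakk> \<Longrightarrow> face_in K (\<Inter>C)"
  unfolding face_in_def by blast

lemma convex_comb_eq_upper_bound:
  fixes t u v m :: real
  assumes "0 < t" "t < 1" "t * u + (1 - t) * v = m" "u \<le> m" "v \<le> m"
  shows "u = m \<and> v = m"
proof -
  have "0 \<le> t * (m - u)" "0 \<le> (1 - t) * (m - v)" using assms by simp_all
  moreover have "t * (m - u) + (1 - t) * (m - v) = 0" using assms(3) by (simp add: algebra_simps)
  ultimately have "t * (m - u) = 0" "(1 - t) * (m - v) = 0" by linarith+
  then show ?thesis using assms(1,2) by simp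
qed

lemma face_in_maximisers:
  assumes F: "face_in K F" and le: "\<forall>\<phi>\<in>F. Re (c * \<phi> x) \<le> m"
  shows "face_in K {\<phi>\<in>F. Re (c * \<phi> x) = m}"
  unfolding face_in_def
proof (intro conjI ballI allI impI)
  show "{\<phi>\<in>F. Re (c * \<phi> x) = m} \<subseteq> K" using face_in_subset[OF F] by blast
next
  fix \<psi>1 \<psi>2 t
  assume \<psi>: "\<psi>1 \<in> K" "\<psi>2 \<in> K"
    and h: "0 < t \<and> t < 1 \<and> convex_comb t \<psi>1 \<psi>2 \<in> {\<phi>\<in>F. Re (c * \<phi> x) = m}"
  then have in_F: "\<psi>1 \<in> F" "\<psi>2 \<in> F" using face_inD[OF F] by blast+
  have "t * Re (c * \<psi>1 x) + (1 - t) * Re (c * \<psi>2 x) = m"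
    using h by (simp add: convex_comb_def algebra_simps)
  then have "Re (c * \<psi>1 x) = m \<and> Re (c * \<psi>2 x) = m"
    using h le in_F by (intro convex_comb_eq_upper_bound) auto
  with in_F show "\<psi>1 \<in> {\<phi>\<in>F. Re (c * \<phi> x) = m}" "\<psi>2 \<in> {\<phi>\<in>F. Re (c * \<phi> x) = m}"
    by simp_all
qed

lemma face_in_argmax:
  assumes F: "face_in K F" and "compact K" "closed F" "F \<noteq> {}"
  obtains m where "face_in K {\<phi>\<in>F. Re (c * \<phi> x) = m}" "closed {\<phi>\<in>F. Re (c * \<phi> x) = m}"
    "{\<phi>\<in>F. Re (c * \<phi> x) = m} \<noteq> {}" "\<forall>\<phi>\<in>F. Re (c * \<phi> x) \<le> m"
proof -
  have "compact F"
    using compact_Int_closed[OF \<open>compact K\<close> \<open>closed F\<close>] face_in_subset[OF F]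
    by (simp add: Int_absorb1)
  then obtain p where p: "p \<in> F" "\<forall>\<phi>\<in>F. Re (c * \<phi> x) \<le> Re (c * p x)"
    using continuous_attains_sup[OF _ \<open>F \<noteq> {}\<close> continuous_on_Re_eval] by blast
  have "closed (F \<inter> {\<phi>. Re (c * \<phi> x) = Re (c * p x)})"
    using \<open>closed F\<close>
    by (intro closed_Int closed_Collect_eq continuous_on_Re_eval continuous_on_const)
  then have "closed {\<phi>\<in>F. Re (c * \<phi> x) = Re (c * p x)}"
    by (simp only: Int_def mem_Collect_eq)
  then show thesis
    using that face_in_maximisers[OF F p(2)] p by blast
qed

lemma compact_chain_Inter_nonempty:
  fixes C :: "'a::topological_space set set"
  assumes "compact K" "C \<noteq> {}"
    and sets: "\<And>S. S \<in> C \<Longrightarrow> closed S \<and> S \<noteq> {} \<and> S \<subseteq> K"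
    and chain: "\<And>S T. S \<in> C \<Longrightarrow> T \<in> C \<Longrightarrow> S \<subseteq> T \<or> T \<subseteq> S"
  shows "\<Inter>C \<noteq> {}"
proof -
  have "K \<inter> \<Inter>C \<noteq> {}"
  proof (rule compact_imp_fip[OF \<open>compact K\<close>])
    show "closed S" if "S \<in> C" for S using sets[OF that] by simp
  next
    fix G assume G: "finite G" "G \<subseteq> C"
    show "K \<inter> \<Inter>G \<noteq> {}"
    proof (cases "G = {}")
      case True
      obtain S where "S \<in> C" using \<open>C \<noteq> {}\<close> by blast
      then have "K \<noteq> {}" using sets by blast
      then show ?thesis using True by simp
    next
      case False
      have "subset.chain C G" using G(2) chain by (auto simp: subset_chain_def)
      then have "\<Inter>G \<in> G" using Inter_in_chain[OF G(1) False] by simp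
      then have "\<Inter>G \<noteq> {}" "\<Inter>G \<subseteq> K" using G(2) sets by blast+
      then show ?thesis by blast
    qed
  qed
  then show ?thesis by blast
qed

lemma closed_face_chain_Inter:
  assumes "compact K" "C \<noteq> {}"
    and faces: "\<And>S. S \<in> C \<Longrightarrow> face_in K S \<and> closed S \<and> S \<noteq> {}"
    and chain: "\<And>S T. S \<in> C \<Longrightarrow> T \<in> C \<Longrightarrow> S \<subseteq> T \<or> T \<subseteq> S"
  shows "face_in K (\<Inter>C)" "closed (\<Inter>C)" "\<Inter>C \<noteq> {}"
proof -
  show "face_in K (\<Inter>C)" using faces by (intro face_in_Inter[OF \<open>C \<noteq> {}\<close>]) blast
  show "closed (\<Inter>C)" using faces by (intro closed_Inter) blast
  have "closed S \<and> S \<noteq> {} \<and> S \<subseteq> K" if "S \<in> C" for S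
    using faces[OF that] face_in_subset by blast
  then show "\<Inter>C \<noteq> {}"
    by (rule compact_chain_Inter_nonempty[OF \<open>compact K\<close> \<open>C \<noteq> {}\<close> _ chain])
qed

lemma face_in_minimal_closed:
  assumes "compact K" "face_in K F0" "closed F0" "F0 \<noteq> {}"
  obtains M where "face_in K M" "closed M" "M \<noteq> {}" "M \<subseteq> F0"
    "\<And>F. \<lbrakk>face_in K F; closed F; F \<noteq> {}; F \<subseteq> M\<rbrakk> \<Longrightarrow> F = M"
proof -
  define A where "A = {F. face_in K F \<and> closed F \<and> F \<noteq> {} \<and> F \<subseteq> F0}"
  have "\<exists>M\<in>A. \<forall>F\<in>A. F \<subseteq> M \<longrightarrow> F = M"
  proof (rule predicate_Zorn[where P = "\<lambda>F G. G \<subseteq> F"])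
    show "partial_order_on A (relation_of (\<lambda>F G. G \<subseteq> F) A)"
      unfolding partial_order_on_def preorder_on_def refl_on_def trans_on_def antisym_on_def
        relation_of_def by auto
  next
    fix C assume "C \<in> Chains (relation_of (\<lambda>F G. G \<subseteq> F) A)"
    then have CA: "C \<subseteq> A" and chain: "\<And>S T. S \<in> C \<Longrightarrow> T \<in> C \<Longrightarrow> S \<subseteq> T \<or> T \<subseteq> S"
      unfolding Chains_def relation_of_def by auto
    show "\<exists>U\<in>A. \<forall>F\<in>C. U \<subseteq> F"
    proof (cases "C = {}")
      case True
      have "F0 \<in> A" using assms(2-4) unfolding A_def by blast
      then show ?thesis using True by blast
    next
      case False
      have "face_in K S \<and> closed S \<and> S \<noteq> {}" if "S \<in> C" for S
        using CA that unfolding A_def by blast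
      note closed_face_chain_Inter[OF \<open>compact K\<close> False this chain]
      moreover have "\<Inter>C \<subseteq> F0" using CA False unfolding A_def by blast
      ultimately have "\<Inter>C \<in> A" unfolding A_def by blast
      then show ?thesis by blast
    qed
  qed
  then obtain M where M: "M \<in> A" and minimal: "\<And>F. F \<in> A \<Longrightarrow> F \<subseteq> M \<Longrightarrow> F = M"
    by blast
  show thesis
  proof (rule that)
    show "face_in K M" "closed M" "M \<noteq> {}" "M \<subseteq> F0" using M unfolding A_def by auto
    fix F assume "face_in K F" "closed F" "F \<noteq> {}" "F \<subseteq> M"
    then show "F = M" using minimal M unfolding A_def by blast
  qed
qed

text \<open>Two points of a face are separated by some functional \<open>\<phi> \<mapsto> Re (c * \<phi> x)\<close>, whose
  maximisers would form a smaller closed face.\<close>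

lemma minimal_closed_face_singleton:
  assumes "compact K" "face_in K M" "closed M" "M \<noteq> {}"
    and minimal: "\<And>F. \<lbrakk>face_in K F; closed F; F \<noteq> {}; F \<subseteq> M\<rbrakk> \<Longrightarrow> F = M"
  obtains p where "M = {p}"
proof -
  have "p = q" if "p \<in> M" "q \<in> M" for p q
  proof (rule ext, rule ccontr)
    fix x assume "p x \<noteq> q x"
    define c where "c = cnj (p x - q x)"
    have "0 < (cmod (p x - q x))\<^sup>2" using \<open>p x \<noteq> q x\<close> by simp
    also have "\<dots> = Re ((p x - q x) * cnj (p x - q x))"
      by (simp only: Re_complex_of_real flip: complex_norm_square)
    also have "\<dots> = Re (c * p x) - Re (c * q x)"
      by (simp add: c_def algebra_simps)
    finally have separated: "Re (c * p x) \<noteq> Re (c * q x)" by simp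
    obtain m where "face_in K {\<phi>\<in>M. Re (c * \<phi> x) = m}" "closed {\<phi>\<in>M. Re (c * \<phi> x) = m}"
      "{\<phi>\<in>M. Re (c * \<phi> x) = m} \<noteq> {}" "\<forall>\<phi>\<in>M. Re (c * \<phi> x) \<le> m"
      by (rule face_in_argmax[OF assms(2,1,3,4)])
    then have "{\<phi>\<in>M. Re (c * \<phi> x) = m} = M" by (intro minimal) auto
    then have "p \<in> {\<phi>\<in>M. Re (c * \<phi> x) = m}" "q \<in> {\<phi>\<in>M. Re (c * \<phi> x) = m}"
      using that by simp_all
    then show False using separated by simp
  qed
  then show thesis using that \<open>M \<noteq> {}\<close> by blast
qed

lemma exists_extreme_point_maximising:
  assumes "compact K" "closed K" "K \<noteq> {}"
  obtains p where "p \<in> K" "face_in K {p}" "\<forall>\<phi>\<in>K. Re (c * \<phi> x) \<le> Re (c * p x)"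
proof -
  obtain m where m: "face_in K {\<phi>\<in>K. Re (c * \<phi> x) = m}" "closed {\<phi>\<in>K. Re (c * \<phi> x) = m}"
    "{\<phi>\<in>K. Re (c * \<phi> x) = m} \<noteq> {}" "\<forall>\<phi>\<in>K. Re (c * \<phi> x) \<le> m"
    by (rule face_in_argmax[OF face_in_refl assms])
  obtain M where M: "face_in K M" "closed M" "M \<noteq> {}" "M \<subseteq> {\<phi>\<in>K. Re (c * \<phi> x) = m}"
    "\<And>F. \<lbrakk>face_in K F; closed F; F \<noteq> {}; F \<subseteq> M\<rbrakk> \<Longrightarrow> F = M"
    using face_in_minimal_closed[OF assms(1) m(1-3)] by blast
  obtain p where "M = {p}"
    by (rule minimal_closed_face_singleton[OF assms(1) M(1-3) M(5)])
  then show thesis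
    using that M(1,4) m(4) by auto
qed

lemma is_pure_state_iff_singleton_face:
  "is_pure_state p \<longleftrightarrow> is_state p \<and> face_in {\<phi>. is_state \<phi>} {p}"
  unfolding is_pure_state_def face_in_def convex_comb_def by auto

lemma pure_state_maximising:
  assumes "is_state \<mu>"
  obtains p where "is_pure_state p" "Re (c * \<mu> x) \<le> Re (c * p x)"
proof -
  obtain p where "is_state p" "face_in {\<phi>. is_state \<phi>} {p}"
    "\<forall>\<phi>\<in>{\<phi>. is_state \<phi>}. Re (c * \<phi> x) \<le> Re (c * p x)"
    using exists_extreme_point_maximising[OF compact_states closed_states] assms by blast
  then show thesis
    using that assms by (auto simp: is_pure_state_iff_singleton_face)
qed

lemma pure_states_dominate:
  assumes st: "is_state \<mu>" "is_state \<nu>" and a: "(a::'a::cstar_algebra) \<in> sa"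
  obtains p q where "is_pure_state p" "is_pure_state q" "cmod (\<mu> a - \<nu> a) \<le> cmod (p a - q a)"
proof -
  define c :: complex where "c = (if Re (\<nu> a) \<le> Re (\<mu> a) then 1 else -1)"
  obtain p where p: "is_pure_state p" "Re (c * \<mu> a) \<le> Re (c * p a)"
    using pure_state_maximising[OF st(1)] by metis
  obtain q where q: "is_pure_state q" "Re (- c * \<nu> a) \<le> Re (- c * q a)"
    using pure_state_maximising[OF st(2)] by metis
  have "cmod (\<mu> a - \<nu> a) = Re (c * (\<mu> a - \<nu> a))"
    using state_sa_real[OF st(1) a] state_sa_real[OF st(2) a] by (simp add: c_def cmod_eq_Re)
  also have "\<dots> \<le> Re (c * (p a - q a))"
    using p(2) q(2) by (simp add: algebra_simps)
  also have "\<dots> \<le> cmod (c * (p a - q a))"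
    by (rule complex_Re_le_cmod)
  also have "\<dots> = cmod (p a - q a)"
    by (simp add: c_def norm_mult)
  finally show thesis using that p(1) q(1) by blast
qed

theorem lemma2p9:
  fixes L :: "'a::cstar_algebra \<Rightarrow> ennreal" and D :: ennreal
  assumes "seminorm_sa L"
    and "sa \<subseteq> closure {a \<in> sa. L a < \<infinity>}"
    and "\<forall>\<mu> \<nu>. is_pure_state \<mu> \<and> is_pure_state \<nu> \<longrightarrow> mk L \<mu> \<nu> \<le> D"
  shows "\<forall>\<mu> \<nu>. is_state \<mu> \<and> is_state \<nu> \<longrightarrow> mk L \<mu> \<nu> \<le> D"
proof (intro allI impI)
  fix \<mu> \<nu> :: "'a \<Rightarrow> complex"
  assume st: "is_state \<mu> \<and> is_state \<nu>"
  show "mk L \<mu> \<nu> \<le> D"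
    unfolding mk_def
  proof (rule SUP_least)
    fix a assume a: "a \<in> {a \<in> sa. L a \<le> 1}"
    then obtain p q where pq: "is_pure_state p" "is_pure_state q"
      "cmod (\<mu> a - \<nu> a) \<le> cmod (p a - q a)"
      using pure_states_dominate st by blast
    then have "ennreal (cmod (\<mu> a - \<nu> a)) \<le> mk L p q"
      unfolding mk_def using a by (blast intro: SUP_upper2 ennreal_leI)
    also have "\<dots> \<le> D" using assms(3) pq(1,2) by blast
    finally show "ennreal (cmod (\<mu> a - \<nu> a)) \<le> D" .
  qed
qed

end
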